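(* Let $S$ be an inverse semigroup that is a separately Scott-continuous mirror semigroup, with semilattice of idempotents $\Sigma$. Then the way-below relation $\ll$ on $S$ is multiplicative if and only if the way-below relation $\prec\!\!\!\prec$ on $\Sigma$ is multiplicative.
   Context: An inverse semigroup is a semigroup $S$ in which every $s$ has a unique $s^*$ with $ss^*s=s$ and $s^*ss^*=s^*$. $\Sigma=\Sigma(S)$ is the set of idempotents (a subsemigroup). The intrinsic order is $s\leqslant t$ iff $s=t\epsilon$ for some idempotent $\epsilon$. A subset is directed if nonempty and any two elements have an upper bound in it. $S$ is a mirror semigroup if every directed subset of $\Sigma$ having a supremum in $(\Sigma,\leqslant)$ also has a supremum in $(S,\leqslant)$. $S$ is separately Scott-continuous if for every directed $D\subseteq S$ with a supremum $\bigvee D$ in $S$ and every $s\in S$, $\bigvee(Ds)$ exists in $S$ and equals $(\bigvee D)s$. In a poset, $x$ is way-below $y$ if for every directed subset $D$ that has a supremum with $y\leqslant \sup D$, there is $d\in D$ with $x\leqslant d$. $\ll$ denotes the way-below relation of $(S,\leqslant)$ and $\prec\!\!\!\prec$ that of $(\Sigma,\leqslant)$. A way-below relation $R$ on a semigroup is multiplicative if $s\,R\,t$ and $s'\,R\,t'$ imply $ss'\,R\,tt'$. *)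

theory Defs
  imports Main
begin

definition inverse_semigroup :: "'a::semigroup_mult itself \<Rightarrow> bool" where
  "inverse_semigroup _ \<longleftrightarrow>
     (\<forall>s::'a. \<exists>!t. s * t * s = s \<and> t * s * t = t)"

definition idems :: "'a::semigroup_mult set" where
  "idems = {e. e * e = e}"

definition nat_le :: "'a::semigroup_mult \<Rightarrow> 'a \<Rightarrow> bool" where
  "nat_le s t \<longleftrightarrow> (\<exists>e \<in> idems. s = t * e)"

definition directed_wrt :: "('a \<Rightarrow> 'a \<Rightarrow> bool) \<Rightarrow> 'a set \<Rightarrow> bool" where
  "directed_wrt le D \<longleftrightarrow> D \<noteq> {} \<and> (\<forall>x\<in>D. \<forall>y\<in>D. \<exists>z\<in>D. le x z \<and> le y z)"

definition is_sup_in :: "'a set \<Rightarrow> ('a \<Rightarrow> 'a \<Rightarrow> bool) \<Rightarrow> 'a set \<Rightarrow> 'a \<Rightarrow> bool" where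
  "is_sup_in P le D x \<longleftrightarrow> x \<in> P \<and> (\<forall>d\<in>D. le d x) \<and>
     (\<forall>u\<in>P. (\<forall>d\<in>D. le d u) \<longrightarrow> le x u)"

definition way_below_in :: "'a set \<Rightarrow> ('a \<Rightarrow> 'a \<Rightarrow> bool) \<Rightarrow> 'a \<Rightarrow> 'a \<Rightarrow> bool" where
  "way_below_in P le x y \<longleftrightarrow>
     (\<forall>D. D \<subseteq> P \<longrightarrow> directed_wrt le D \<longrightarrow>
        (\<forall>z. is_sup_in P le D z \<longrightarrow> le y z \<longrightarrow> (\<exists>d\<in>D. le x d)))"

definition mirror_semigroup :: "'a::semigroup_mult itself \<Rightarrow> bool" where
  "mirror_semigroup _ \<longleftrightarrow>
     (\<forall>D::'a set. D \<subseteq> idems \<longrightarrow> directed_wrt nat_le D \<longrightarrow>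
        (\<exists>x. is_sup_in idems nat_le D x) \<longrightarrow> (\<exists>y. is_sup_in UNIV nat_le D y))"

definition sep_scott_continuous :: "'a::semigroup_mult itself \<Rightarrow> bool" where
  "sep_scott_continuous _ \<longleftrightarrow>
     (\<forall>D::'a set. \<forall>x. directed_wrt nat_le D \<longrightarrow> is_sup_in UNIV nat_le D x \<longrightarrow>
        (\<forall>s. is_sup_in UNIV nat_le ((\<lambda>d. d * s) ` D) (x * s)))"

definition multiplicative_on :: "'a::semigroup_mult set \<Rightarrow> ('a \<Rightarrow> 'a \<Rightarrow> bool) \<Rightarrow> bool" where
  "multiplicative_on P R \<longleftrightarrow>
     (\<forall>s\<in>P. \<forall>t\<in>P. \<forall>s'\<in>P. \<forall>t'\<in>P. R s t \<longrightarrow> R s' t' \<longrightarrow> R (s * s') (t * t'))"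

end

theory Submission
  imports Defs
begin

text \<open>
  Inversion \<open>s \<mapsto> s\<^sup>*\<close> is an order automorphism of \<open>S\<close>, and on the elements \<open>y\<close> with
  \<open>y a a\<^sup>* = y\<close> right translation by \<open>a\<close> is an order embedding undone by right translation
  by \<open>a\<^sup>*\<close>; with separate Scott-continuity this makes both maps preserve \<open>\<ll>\<close>, and left
  translations follow by conjugating with inversion. The mirror property makes \<open>\<ll>\<close> and
  \<open>\<prec>\<prec>\<close> agree on idempotents, which gives one direction at once. For the other, if
  \<open>s \<ll> t\<close> and \<open>s' \<ll> t'\<close> then translating gives \<open>s\<^sup>*s \<ll> t\<^sup>*t\<close> and
  \<open>s's'\<^sup>* \<ll> t't'\<^sup>*\<close> between idempotents; multiplying these with \<open>\<prec>\<prec>\<close> and translating back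
  by \<open>t\<close> on the left and \<open>t'\<close> on the right turns \<open>s\<^sup>*s s's'\<^sup>* \<ll> t\<^sup>*t t't'\<^sup>*\<close> into
  \<open>ss' \<ll> tt'\<close>.
\<close>

lemma idems_iff:
  fixes e :: "'a::semigroup_mult"
  shows "e \<in> idems \<longleftrightarrow> e * e = e"
  by (simp add: idems_def)

lemma idem_left:
  fixes e y :: "'a::semigroup_mult"
  shows "e * e = e \<Longrightarrow> e * (e * y) = e * y"
  by (metis mult.assoc)

lemma nat_le_mult_idem:
  fixes s e :: "'a::semigroup_mult"
  shows "e \<in> idems \<Longrightarrow> nat_le (s * e) s"
  unfolding nat_le_def by blast

locale inverse_semigroup_type =
  fixes T :: "'a::semigroup_mult itself"
  assumes inverse_semigroup: "inverse_semigroup T"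
begin

definition sinv :: "'a \<Rightarrow> 'a" where
  "sinv s = (THE t. s * t * s = s \<and> t * s * t = t)"

lemma ex1_sinv: "\<exists>!t::'a. s * t * s = s \<and> t * s * t = t"
  using inverse_semigroup unfolding inverse_semigroup_def by blast

lemma sinv_left_right: "s * sinv s * s = s \<and> sinv s * s * sinv s = sinv s"
  unfolding sinv_def by (rule theI') (rule ex1_sinv)

lemma sinv_left: "s * sinv s * s = s"
  and sinv_right: "sinv s * s * sinv s = sinv s"
  using sinv_left_right by auto

lemma sinv_unique: "s * t * s = s \<Longrightarrow> t * s * t = t \<Longrightarrow> sinv s = t"
  unfolding sinv_def by (rule the1_equality) (rule ex1_sinv, simp)

lemma sinv_left_assoc: "s * (sinv s * s) = s"
  and sinv_right_assoc: "sinv s * (s * sinv s) = sinv s"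
  using sinv_left sinv_right by (simp_all add: mult.assoc)

lemma sinv_left': "s * (sinv s * (s * y)) = s * y"
  by (metis sinv_left mult.assoc)

lemma sinv_right': "sinv s * (s * (sinv s * y)) = sinv s * y"
  by (metis sinv_right mult.assoc)

lemma sinv_sinv [simp]: "sinv (sinv s) = s"
  by (rule sinv_unique) (simp_all add: sinv_left sinv_right)

lemma sinv_idem: "e * e = e \<Longrightarrow> sinv e = e"
  by (rule sinv_unique) simp_all

text \<open>\<open>f (ef)\<^sup>* e\<close> is again an inverse of \<open>ef\<close>, so \<open>(ef)\<^sup>*\<close> equals it and is
  idempotent, hence so is its inverse \<open>ef\<close>.\<close>

lemma idem_mult_idem:
  fixes e f :: 'a
  assumes e: "e * e = e" and f: "f * f = f"
  shows "e * f * (e * f) = e * f"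
proof -
  define x where "x = sinv (e * f)"
  have h1: "e * f * x * (e * f) = e * f" and h2: "x * (e * f) * x = x"
    unfolding x_def by (simp_all add: sinv_left sinv_right)
  have h2': "x * (e * (f * (x * y))) = x * y" for y
    using h2 by (metis mult.assoc)
  have "sinv (e * f) = f * x * e"
    by (rule sinv_unique) (use h1 h2' in \<open>simp_all add: mult.assoc idem_left[OF e] idem_left[OF f]\<close>)
  hence x_eq: "x = f * x * e"
    unfolding x_def by simp
  have "x * x = x"
    by (metis h2 mult.assoc x_eq)
  moreover have "sinv x = e * f"
    by (rule sinv_unique) (use h1 h2 in \<open>simp_all add: mult.assoc\<close>)
  ultimately show ?thesis
    using sinv_idem by metis
qed

text \<open>\<open>fe\<close> is an inverse of the idempotent \<open>ef\<close>, which is its own inverse.\<close>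

lemma idem_commute:
  fixes e f :: 'a
  assumes e: "e * e = e" and f: "f * f = f"
  shows "e * f = f * e"
proof -
  have "sinv (e * f) = f * e"
    by (rule sinv_unique)
      (use idem_mult_idem[OF e f] idem_mult_idem[OF f e] in
        \<open>simp_all add: mult.assoc idem_left[OF e] idem_left[OF f]\<close>)
  with sinv_idem[OF idem_mult_idem[OF e f]] show ?thesis
    by simp
qed

lemma idem_commute':
  fixes e f :: 'a
  shows "e * e = e \<Longrightarrow> f * f = f \<Longrightarrow> e * (f * y) = f * (e * y)"
  by (metis idem_commute mult.assoc)

lemma sinv_mult_self_idem: "sinv s * s * (sinv s * s) = sinv s * s"
  by (metis sinv_left mult.assoc)

lemma mult_sinv_self_idem: "s * sinv s * (s * sinv s) = s * sinv s"
  by (metis sinv_right mult.assoc)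

lemma sinv_mult_self_in_idems: "sinv s * s \<in> idems"
  and mult_sinv_self_in_idems: "s * sinv s \<in> idems"
  by (simp_all add: idems_iff sinv_mult_self_idem mult_sinv_self_idem)

lemma sinv_mult: "sinv (s * t) = sinv t * sinv s"
proof (rule sinv_unique)
  have c: "t * (sinv t * (sinv s * (s * y))) = sinv s * (s * (t * (sinv t * y)))" for y
    using idem_commute'[OF mult_sinv_self_idem[of t] sinv_mult_self_idem[of s]]
    by (simp add: mult.assoc)
  show "s * t * (sinv t * sinv s) * (s * t) = s * t"
    by (simp add: mult.assoc c sinv_left' sinv_left_assoc)
  show "sinv t * sinv s * (s * t) * (sinv t * sinv s) = sinv t * sinv s"
    by (simp add: mult.assoc c[symmetric] sinv_right' sinv_right_assoc)
qed

lemma nat_le_iff_domain: "nat_le s t \<longleftrightarrow> s = t * (sinv s * s)"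
proof
  assume "nat_le s t"
  then obtain e where e: "e * e = e" and s: "s = t * e"
    by (auto simp: nat_le_def idems_def)
  have c: "e * (sinv t * (t * y)) = sinv t * (t * (e * y))" for y
    using idem_commute'[OF e sinv_mult_self_idem[of t]] by (simp add: mult.assoc)
  show "s = t * (sinv s * s)"
    using e by (simp add: s sinv_mult sinv_idem mult.assoc c sinv_left' sinv_left_assoc)
next
  assume "s = t * (sinv s * s)"
  thus "nat_le s t"
    unfolding nat_le_def using sinv_mult_self_in_idems by blast
qed

lemma nat_le_idem_mult:
  fixes e t :: 'a
  assumes e: "e \<in> idems"
  shows "nat_le (e * t) t"
proof -
  have e: "e * e = e"
    using e unfolding idems_iff .
  have c: "t * (sinv t * (e * y)) = e * (t * (sinv t * y))" for y
    using idem_commute'[OF mult_sinv_self_idem[of t] e] by (simp add: mult.assoc)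
  have "sinv t * e * t * (sinv t * e * t) = sinv t * e * t"
    by (simp add: mult.assoc c idem_left[OF e] sinv_right' sinv_left_assoc)
  moreover have "e * t = t * (sinv t * e * t)"
    by (simp add: mult.assoc c sinv_left' sinv_left_assoc)
  ultimately show ?thesis
    unfolding nat_le_def idems_def by blast
qed

lemma nat_le_refl:
  fixes s :: 'a
  shows "nat_le s s"
  unfolding nat_le_iff_domain by (simp add: sinv_left_assoc)

lemma nat_le_sinv:
  assumes "nat_le s t"
  shows "nat_le (sinv s) (sinv t)"
proof -
  obtain e where e: "e * e = e" and s: "s = t * e"
    using assms by (auto simp: nat_le_def idems_def)
  have "sinv s = e * sinv t"
    using e by (simp add: s sinv_mult sinv_idem)
  with e show ?thesis
    using nat_le_idem_mult by (simp add: idems_iff)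
qed

lemma nat_le_idem_down:
  fixes s f :: 'a
  assumes "nat_le s f" and "f \<in> idems"
  shows "s \<in> idems"
proof -
  obtain e where "e * e = e" and "s = f * e"
    using assms(1) by (auto simp: nat_le_def idems_def)
  with assms(2) show ?thesis
    using idem_mult_idem unfolding idems_iff by blast
qed

lemma nat_le_idem_eq:
  fixes f t :: 'a
  assumes "nat_le f t" and "f \<in> idems"
  shows "t * f = f"
proof -
  have "f * f = f"
    using assms(2) unfolding idems_iff .
  moreover have "f = t * (sinv f * f)"
    using assms(1) unfolding nat_le_iff_domain .
  ultimately show ?thesis
    by (simp add: sinv_idem)
qed

lemma nat_le_range:
  assumes "nat_le s t"
  shows "s = s * sinv s * t"
proof -
  have "sinv s = sinv t * (s * sinv s)"
    using nat_le_sinv[OF assms] unfolding nat_le_iff_domain by simp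
  hence "s = sinv (s * sinv s) * t"
    by (metis sinv_mult sinv_sinv)
  thus ?thesis
    by (simp add: sinv_idem mult_sinv_self_idem)
qed

lemma nat_le_iff_left:
  fixes s t :: 'a
  shows "nat_le s t \<longleftrightarrow> (\<exists>e\<in>idems. s = e * t)"
proof
  assume "nat_le s t"
  thus "\<exists>e\<in>idems. s = e * t"
    using nat_le_range mult_sinv_self_in_idems by (metis mult.assoc)
next
  assume "\<exists>e\<in>idems. s = e * t"
  thus "nat_le s t"
    using nat_le_idem_mult by blast
qed

lemma nat_le_trans:
  fixes s t u :: 'a
  assumes "nat_le s t" and "nat_le t u"
  shows "nat_le s u"
proof -
  obtain e f where e: "e * e = e" "s = e * t" and f: "f * f = f" "t = f * u"
    using assms by (auto simp: nat_le_iff_left idems_def)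
  have "e * f * (e * f) = e * f"
    by (rule idem_mult_idem[OF e(1) f(1)])
  moreover have "s = e * f * u"
    using e f by (simp add: mult.assoc)
  ultimately show ?thesis
    unfolding nat_le_iff_left idems_def by blast
qed

lemma nat_le_mult_right:
  fixes s t a :: 'a
  shows "nat_le s t \<Longrightarrow> nat_le (s * a) (t * a)"
  unfolding nat_le_iff_left by (auto simp: mult.assoc)

lemma nat_le_sinv_domain:
  assumes "nat_le s t"
  shows "sinv t * s = sinv s * s"
proof -
  obtain e where e: "e * e = e" and s: "s = t * e"
    using assms by (auto simp: nat_le_def idems_def)
  have c: "e * (sinv t * (t * y)) = sinv t * (t * (e * y))" for y
    using idem_commute'[OF e sinv_mult_self_idem[of t]] by (simp add: mult.assoc)
  show ?thesis
    using e by (simp add: s sinv_mult sinv_idem mult.assoc c idem_left[OF e])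
qed

lemma nat_le_range_sinv:
  assumes "nat_le s t"
  shows "s * sinv t = s * sinv s"
proof -
  have "t * sinv s = s * sinv s"
    using nat_le_sinv_domain[OF nat_le_sinv[OF assms]] by simp
  hence "sinv (t * sinv s) = sinv (s * sinv s)"
    by simp
  thus ?thesis
    by (simp add: sinv_mult sinv_idem mult_sinv_self_idem)
qed

abbreviation way_below :: "'a \<Rightarrow> 'a \<Rightarrow> bool" where
  "way_below \<equiv> way_below_in UNIV nat_le"

lemma directed_mult_right:
  fixes D :: "'a set"
  assumes "directed_wrt nat_le D"
  shows "directed_wrt nat_le ((\<lambda>d. d * a) ` D)"
  using assms unfolding directed_wrt_def by (auto intro: nat_le_mult_right)

lemma way_below_imp_nat_le:
  assumes "way_below x y"
  shows "nat_le x y"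
proof -
  have "directed_wrt nat_le {y}" and "is_sup_in UNIV nat_le {y} y"
    unfolding directed_wrt_def is_sup_in_def using nat_le_refl by auto
  with assms show ?thesis
    using nat_le_refl unfolding way_below_in_def by blast
qed

lemma way_below_sinv:
  assumes "way_below x y"
  shows "way_below (sinv x) (sinv y)"
  unfolding way_below_in_def
proof (intro allI impI)
  fix D :: "'a set" and z
  assume dir: "directed_wrt nat_le D" and sup: "is_sup_in UNIV nat_le D z"
    and yz: "nat_le (sinv y) z"
  have "directed_wrt nat_le (sinv ` D)"
    using dir unfolding directed_wrt_def by (auto intro: nat_le_sinv)
  moreover have "is_sup_in UNIV nat_le (sinv ` D) (sinv z)"
    using sup unfolding is_sup_in_def by (auto intro: nat_le_sinv) (metis nat_le_sinv sinv_sinv)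
  moreover have "nat_le y (sinv z)"
    using nat_le_sinv[OF yz] by simp
  ultimately obtain d where "d \<in> D" and "nat_le x (sinv d)"
    using assms unfolding way_below_in_def by blast
  thus "\<exists>d\<in>D. nat_le (sinv x) d"
    using nat_le_sinv[of x "sinv d"] by auto
qed

lemma way_below_mult_right:
  assumes sep: "sep_scott_continuous TYPE('a)"
    and wb: "way_below x y" and y: "y * a * sinv a = y"
  shows "way_below (x * a) (y * a)"
  unfolding way_below_in_def
proof (intro allI impI)
  fix D :: "'a set" and z
  assume dir: "directed_wrt nat_le D" and sup: "is_sup_in UNIV nat_le D z"
    and yz: "nat_le (y * a) z"
  have "is_sup_in UNIV nat_le ((\<lambda>d. d * sinv a) ` D) (z * sinv a)"
    using sep dir sup unfolding sep_scott_continuous_def by blast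
  moreover have "nat_le y (z * sinv a)"
    using nat_le_mult_right[OF yz, of "sinv a"] y by simp
  ultimately obtain d where d: "d \<in> D" and "nat_le x (d * sinv a)"
    using wb directed_mult_right[OF dir] unfolding way_below_in_def by blast
  hence "nat_le (x * a) (d * (sinv a * a))"
    using nat_le_mult_right by (fastforce simp: mult.assoc)
  moreover have "nat_le (d * (sinv a * a)) d"
    by (rule nat_le_mult_idem[OF sinv_mult_self_in_idems])
  ultimately show "\<exists>d\<in>D. nat_le (x * a) d"
    using d nat_le_trans by blast
qed

lemma way_below_mult_left:
  assumes sep: "sep_scott_continuous TYPE('a)"
    and wb: "way_below x y" and y: "sinv a * a * y = y"
  shows "way_below (a * x) (a * y)"
proof -
  have "sinv y * sinv a * a = sinv y"
    using arg_cong[OF y, of sinv] by (simp add: sinv_mult sinv_idem sinv_mult_self_idem mult.assoc)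
  hence "way_below (sinv x * sinv a) (sinv y * sinv a)"
    using way_below_mult_right[OF sep way_below_sinv[OF wb]] by simp
  thus ?thesis
    using way_below_sinv by (fastforce simp: sinv_mult)
qed

lemma way_below_domain:
  assumes sep: "sep_scott_continuous TYPE('a)" and wb: "way_below s t"
  shows "way_below (sinv s * s) (sinv t * t)"
proof -
  have "way_below (sinv t * s) (sinv t * t)"
    by (rule way_below_mult_left[OF sep wb]) (simp add: sinv_left)
  thus ?thesis
    using nat_le_sinv_domain[OF way_below_imp_nat_le[OF wb]] by simp
qed

lemma way_below_range:
  assumes sep: "sep_scott_continuous TYPE('a)" and wb: "way_below s t"
  shows "way_below (s * sinv s) (t * sinv t)"
proof -
  have "way_below (s * sinv t) (t * sinv t)"
    by (rule way_below_mult_right[OF sep wb]) (simp add: sinv_left)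
  thus ?thesis
    using nat_le_range_sinv[OF way_below_imp_nat_le[OF wb]] by simp
qed

text \<open>For \<open>D \<subseteq> \<Sigma>\<close>, the supremum in \<open>S\<close> given by the mirror property lies below
  the supremum in \<open>\<Sigma>\<close>, hence is itself idempotent, and so the two coincide.\<close>

lemma way_below_idems_of_way_below:
  assumes mir: "mirror_semigroup TYPE('a)" and wb: "way_below e f"
  shows "way_below_in idems nat_le e f"
  unfolding way_below_in_def
proof (intro allI impI)
  fix D :: "'a set" and z
  assume sub: "D \<subseteq> idems" and dir: "directed_wrt nat_le D"
    and sup: "is_sup_in idems nat_le D z" and fz: "nat_le f z"
  obtain y where y: "is_sup_in UNIV nat_le D y"
    using mir sub dir sup unfolding mirror_semigroup_def by blast
  have "nat_le y z" and "z \<in> idems"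
    using y sup unfolding is_sup_in_def by blast+
  hence "y \<in> idems"
    by (rule nat_le_idem_down)
  hence "nat_le z y"
    using y sup unfolding is_sup_in_def by blast
  hence "nat_le f y"
    using fz nat_le_trans by blast
  thus "\<exists>d\<in>D. nat_le e d"
    using wb dir y unfolding way_below_in_def by blast
qed

text \<open>Conversely, cutting a directed \<open>D \<subseteq> S\<close> down by the idempotent \<open>f \<le> \<Or>D\<close>
  gives a directed subset of \<open>\<Sigma>\<close> with supremum \<open>(\<Or>D) f = f\<close>.\<close>

lemma way_below_of_way_below_idems:
  assumes sep: "sep_scott_continuous TYPE('a)" and f: "f \<in> idems"
    and wb: "way_below_in idems nat_le e f"
  shows "way_below e f"
  unfolding way_below_in_def
proof (intro allI impI)
  fix D :: "'a set" and z
  assume dir: "directed_wrt nat_le D" and sup: "is_sup_in UNIV nat_le D z"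
    and fz: "nat_le f z"
  let ?Df = "(\<lambda>d. d * f) ` D"
  have zf: "z * f = f"
    using nat_le_idem_eq[OF fz f] .
  have "is_sup_in UNIV nat_le ?Df f"
    using sep dir sup zf unfolding sep_scott_continuous_def by metis
  moreover have "?Df \<subseteq> idems"
  proof
    fix x assume "x \<in> ?Df"
    then obtain d where "d \<in> D" and x: "x = d * f" by blast
    hence "nat_le x f"
      using sup nat_le_mult_right[of d z f] zf unfolding is_sup_in_def by auto
    thus "x \<in> idems"
      using f by (rule nat_le_idem_down)
  qed
  ultimately have "is_sup_in idems nat_le ?Df f"
    using f unfolding is_sup_in_def by blast
  then obtain d where d: "d \<in> D" and "nat_le e (d * f)"
    using wb \<open>?Df \<subseteq> idems\<close> directed_mult_right[OF dir] nat_le_refl[of f]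
    unfolding way_below_in_def by blast
  moreover have "nat_le (d * f) d"
    using f by (rule nat_le_mult_idem)
  ultimately show "\<exists>d\<in>D. nat_le e d"
    using nat_le_trans by blast
qed

lemma multiplicative_idems_of_multiplicative:
  assumes mir: "mirror_semigroup TYPE('a)" and sep: "sep_scott_continuous TYPE('a)"
    and mult: "multiplicative_on (UNIV::'a set) way_below"
  shows "multiplicative_on (idems::'a set) (way_below_in idems nat_le)"
  unfolding multiplicative_on_def
proof (intro ballI impI)
  fix s t s' t' :: 'a
  assume "s \<in> idems" "t \<in> idems" "s' \<in> idems" "t' \<in> idems"
    and "way_below_in idems nat_le s t" and "way_below_in idems nat_le s' t'"
  hence "way_below s t" and "way_below s' t'"
    using way_below_of_way_below_idems[OF sep] by blast+
  hence "way_below (s * s') (t * t')"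
    using mult unfolding multiplicative_on_def by blast
  thus "way_below_in idems nat_le (s * s') (t * t')"
    by (rule way_below_idems_of_way_below[OF mir])
qed

lemma multiplicative_of_multiplicative_idems:
  assumes mir: "mirror_semigroup TYPE('a)" and sep: "sep_scott_continuous TYPE('a)"
    and mult: "multiplicative_on (idems::'a set) (way_below_in idems nat_le)"
  shows "multiplicative_on (UNIV::'a set) way_below"
  unfolding multiplicative_on_def
proof (intro ballI impI)
  fix s t s' t' :: 'a
  assume wb: "way_below s t" and wb': "way_below s' t'"
  let ?e = "sinv s * s * (s' * sinv s')" and ?f = "sinv t * t * (t' * sinv t')"
  have "way_below_in idems nat_le ?e ?f"
    using mult way_below_idems_of_way_below[OF mir way_below_domain[OF sep wb]]
      way_below_idems_of_way_below[OF mir way_below_range[OF sep wb']]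
      sinv_mult_self_in_idems mult_sinv_self_in_idems
    unfolding multiplicative_on_def by blast
  moreover have "?f \<in> idems"
    using idem_mult_idem[OF sinv_mult_self_idem mult_sinv_self_idem] idems_iff by blast
  ultimately have "way_below ?e ?f"
    using way_below_of_way_below_idems[OF sep] by blast
  hence "way_below (t * ?e) (t * ?f)"
    by (rule way_below_mult_left[OF sep]) (simp add: mult.assoc sinv_right' sinv_left')
  hence "way_below (t * ?e * t') (t * ?f * t')"
    by (rule way_below_mult_right[OF sep])
      (simp add: mult.assoc sinv_right' sinv_left' sinv_left_assoc
        sinv_right_assoc)
  moreover have "t * ?e * t' = s * s'"
  proof -
    have "s = t * (sinv s * s)" and "s' = s' * sinv s' * t'"
      using way_below_imp_nat_le[OF wb] way_below_imp_nat_le[OF wb']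
      by (simp_all flip: nat_le_iff_domain add: nat_le_range)
    hence "t * (sinv s * s) * (s' * sinv s' * t') = s * s'"
      by simp
    thus ?thesis
      by (simp add: mult.assoc)
  qed
  moreover have "t * ?f * t' = t * t'"
    by (simp add: mult.assoc sinv_left' sinv_left_assoc)
  ultimately show "way_below (s * s') (t * t')"
    by simp
qed

end

theorem proposition4p6:
  assumes "inverse_semigroup TYPE('a::semigroup_mult)"
    and "mirror_semigroup TYPE('a)"
    and "sep_scott_continuous TYPE('a)"
  shows "multiplicative_on (UNIV::'a set) (way_below_in UNIV nat_le)
     \<longleftrightarrow> multiplicative_on (idems::'a set) (way_below_in idems nat_le)"
proof -
  interpret inverse_semigroup_type "TYPE('a)"
    by (rule inverse_semigroup_type.intro) (rule assms(1))
  show ?thesis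
    using multiplicative_idems_of_multiplicative[OF assms(2,3)]
      multiplicative_of_multiplicative_idems[OF assms(2,3)] by blast
qed

end
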